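(* Let $G$ be a transcendental entire function and $g = G'$. Let $\Gamma$ be a curve tending to infinity, meeting no zero of $g$, on which $\mathrm{Im}\, G(z) = \beta$ is constant ($\beta\in\mathbb{R}$) and $X = \mathrm{Re}\, G(z)$ increases as $\Gamma$ is followed towards infinity, with $X \geq \alpha$ for some $\alpha \in \mathbb{R}$. Suppose that $(z_n)$ is a sequence tending to infinity on $\Gamma$ such that $v_n = G(z_n) = X_n + i\beta$ satisfies $v_n = o(|z_n|^2)$ as $n\to\infty$. Then the trajectory of the flow $\dot z = \overline{g(z)}$ which follows $\Gamma$ takes infinite time in tending to infinity.
   Context: Trajectories of $\dot z = \overline{g(z)}$ (paths with $z'(t)=\overline{g(z(t))}$) are level curves of $\mathrm{Im}\, G$ on which $\mathrm{Re}\, G$ increases with $t$. It is not assumed that $X \to +\infty$ as $z\to\infty$ on $\Gamma$. *)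

theory Defs
  imports "HOL-Complex_Analysis.Complex_Analysis" "HOL-Library.Landau_Symbols"
begin

definition transcendental_entire :: "(complex \<Rightarrow> complex) \<Rightarrow> bool" where
  "transcendental_entire G \<longleftrightarrow> G holomorphic_on UNIV \<and> \<not> (\<exists>p. \<forall>z. G z = poly p z)"

end

theory Submission
  imports Defs
begin

(* Along a trajectory of dz/dt = conj (G' z) one has d/dt Re G(z) = |G'(z)|^2 = |dz/dt|^2, so by
   Cauchy-Schwarz |z(t) - z(0)|^2 <= t (Re G(z(t)) - Re G(z(0))). If the trajectory escaped to
   infinity at a finite time T, Re G(z(t)) would tend to +infinity; by the intermediate value theorem
   and the local injectivity of G on the level curve (G' has no zeros there), the trajectory would
   then pass through every z_n beyond z(0). The inequality at z_n gives |z_n|^2 = O(|v_n| + 1),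
   contradicting v_n = o(|z_n|^2). *)

lemma norm_diff_sq_le_energy:
  fixes z w :: "real \<Rightarrow> 'a::real_inner" and X :: "real \<Rightarrow> real"
  assumes "0 \<le> t" "0 < c"
    and z_cont: "continuous_on {0..t} z" and X_cont: "continuous_on {0..t} X"
    and z_deriv: "\<And>s. s \<in> {0<..<t} \<Longrightarrow> (z has_vector_derivative w s) (at s)"
    and X_deriv: "\<And>s. s \<in> {0<..<t} \<Longrightarrow> (X has_real_derivative (norm (w s))\<^sup>2) (at s)"
  shows "(norm (z t - z 0))\<^sup>2 \<le> (t + c) * (X t - X 0)"
proof -
  (* K is nondecreasing: by Cauchy-Schwarz its derivative is at least (|w| - |z s - z 0| / (s + c))^2.
     The shift c keeps the denominator positive at s = 0. *)
  define K where "K s = X s - inner (z s - z 0) (z s - z 0) / (s + c)" for s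
  have "K 0 \<le> K t"
  proof (rule DERIV_nonneg_imp_increasing_open[OF \<open>0 \<le> t\<close>])
    fix s assume s: "0 < s" "s < t"
    define u where "u = z s - z 0"
    define d where "d = s + c"
    have "d > 0" using s \<open>0 < c\<close> by (simp add: d_def)
    have "((\<lambda>s. z s - z 0) has_derivative (\<lambda>h. h *\<^sub>R w s)) (at s)"
      using z_deriv[of s] s unfolding has_vector_derivative_def by (auto intro!: derivative_eq_intros)
    from has_derivative_inner[OF this this]
    have "((\<lambda>s. inner (z s - z 0) (z s - z 0)) has_real_derivative 2 * inner u (w s)) (at s)"
      unfolding has_field_derivative_def u_def
      by (rule has_derivative_eq_rhs) (simp add: fun_eq_iff inner_commute)
    from DERIV_diff[OF X_deriv DERIV_divide[OF this DERIV_add[OF DERIV_ident DERIV_const]]]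
    have "(K has_real_derivative
        (norm (w s))\<^sup>2 - (2 * inner u (w s) * d - inner u u) / d\<^sup>2) (at s)"
      using s \<open>d > 0\<close> unfolding K_def by (simp add: u_def d_def power2_eq_square)
    moreover have "0 \<le> (norm (w s))\<^sup>2 - (2 * inner u (w s) * d - inner u u) / d\<^sup>2"
    proof -
      have "inner u (w s) \<le> norm u * norm (w s)" by (rule norm_cauchy_schwarz)
      then have "0 \<le> (norm (w s) * d - norm u)\<^sup>2 + 2 * d * (norm u * norm (w s) - inner u (w s))"
        using \<open>d > 0\<close> by simp
      also have "\<dots> = d\<^sup>2 * ((norm (w s))\<^sup>2 - (2 * inner u (w s) * d - inner u u) / d\<^sup>2)"
        using \<open>d > 0\<close> by (simp add: field_simps power2_eq_square power2_norm_eq_inner[symmetric])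
      finally show ?thesis using \<open>d > 0\<close> by (simp add: zero_le_mult_iff)
    qed
    ultimately show "\<exists>y. (K has_real_derivative y) (at s) \<and> 0 \<le> y" by blast
  next
    show "continuous_on {0..t} K"
      unfolding K_def using \<open>0 < c\<close> by (intro continuous_intros z_cont X_cont) auto
  qed
  then have "inner (z t - z 0) (z t - z 0) / (t + c) \<le> X t - X 0"
    by (simp add: K_def)
  then show ?thesis
    using \<open>0 \<le> t\<close> \<open>0 < c\<close> by (simp add: power2_norm_eq_inner pos_divide_le_eq mult.commute)
qed

definition flow_trajectory :: "(complex \<Rightarrow> complex) \<Rightarrow> real \<Rightarrow> (real \<Rightarrow> complex) \<Rightarrow> bool" where
  "flow_trajectory G T z \<longleftrightarrow>
     (\<forall>t\<in>{0..<T}. (z has_vector_derivative cnj (deriv G (z t))) (at t within {0..<T}))"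

lemma flow_trajectory_continuous_on:
  "flow_trajectory G T z \<Longrightarrow> continuous_on {0..<T} z"
  unfolding flow_trajectory_def
  by (meson continuous_on_eq_continuous_within has_vector_derivative_continuous)

lemma flow_trajectory_has_vector_derivative:
  assumes "flow_trajectory G T z" "t \<in> {0<..<T}"
  shows "(z has_vector_derivative cnj (deriv G (z t))) (at t)"
proof -
  have "(z has_vector_derivative cnj (deriv G (z t))) (at t within {0..<T})"
    using assms unfolding flow_trajectory_def by auto
  then have "(z has_vector_derivative cnj (deriv G (z t))) (at t within {0<..<T})"
    by (rule has_vector_derivative_within_subset) auto
  moreover have "at t within {0<..<T} = at t"
    using assms(2) by (intro at_within_open) auto
  ultimately show ?thesis
    by simp
qed

lemma continuous_on_Re_holomorphic_comp:
  assumes "G holomorphic_on UNIV" "continuous_on S z"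
  shows "continuous_on S (\<lambda>s. Re (G (z s)))"
  using continuous_on_compose2[OF holomorphic_on_imp_continuous_on[OF assms(1)] assms(2)]
  by (intro continuous_on_Re) simp

lemma Re_comp_flow_has_real_derivative:
  assumes "G holomorphic_on UNIV"
    and "(z has_vector_derivative cnj (deriv G (z t))) (at t)"
  shows "((\<lambda>s. Re (G (z s))) has_real_derivative (cmod (deriv G (z t)))\<^sup>2) (at t)"
proof -
  let ?g = "deriv G (z t)"
  have "(G has_field_derivative ?g) (at (z t))"
    using assms(1) by (auto intro: holomorphic_derivI)
  then have "((G \<circ> z) has_vector_derivative cnj ?g * ?g) (at t)"
    using field_vector_diff_chain_at assms(2) by blast
  then have "((\<lambda>s. Re ((G \<circ> z) s)) has_real_derivative Re (cnj ?g * ?g)) (at t)"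
    by (rule has_field_derivative_Re)
  moreover have "Re (cnj ?g * ?g) = (cmod ?g)\<^sup>2"
    using cmod_power2[of ?g] by (simp add: power2_eq_square)
  ultimately show ?thesis
    by (simp only: o_def)
qed

lemma flow_trajectory_displacement:
  assumes hol: "G holomorphic_on UNIV" and flow: "flow_trajectory G T z" and t: "t \<in> {0..<T}"
  shows "(cmod (z t - z 0))\<^sup>2 \<le> T * (Re (G (z t)) - Re (G (z 0)))"
proof -
  have z_cont: "continuous_on {0..t} z"
    using flow_trajectory_continuous_on[OF flow] by (rule continuous_on_subset) (use t in auto)
  have z_deriv: "(z has_vector_derivative cnj (deriv G (z s))) (at s)" if "s \<in> {0<..<t}" for s
    by (rule flow_trajectory_has_vector_derivative[OF flow]) (use that t in auto)
  have "(cmod (z t - z 0))\<^sup>2 \<le> (t + (T - t)) * (Re (G (z t)) - Re (G (z 0)))"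
  proof (rule norm_diff_sq_le_energy[where w = "\<lambda>s. cnj (deriv G (z s))"
        and X = "\<lambda>s. Re (G (z s))" and c = "T - t"])
    show "continuous_on {0..t} (\<lambda>s. Re (G (z s)))"
      using hol z_cont by (rule continuous_on_Re_holomorphic_comp)
    show "((\<lambda>s. Re (G (z s))) has_real_derivative (cmod (cnj (deriv G (z s))))\<^sup>2) (at s)"
      if "s \<in> {0<..<t}" for s
      using Re_comp_flow_has_real_derivative[OF hol z_deriv[OF that]] by simp
    show "0 \<le> t" "0 < T - t"
      using t by auto
  qed (fact z_cont | fact z_deriv)+
  then show ?thesis by simp
qed

lemma flow_trajectory_Re_tendsto_at_top:
  assumes hol: "G holomorphic_on UNIV" and flow: "flow_trajectory G T z" and "T > 0"
    and z_inf: "filterlim z at_infinity (at_left T)"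
  shows "filterlim (\<lambda>t. Re (G (z t))) at_top (at_left T)"
proof (rule filterlim_at_top_mono)
  have "filterlim (\<lambda>t. z t - z 0) at_infinity (at_left T)"
    using tendsto_add_filterlim_at_infinity'[OF z_inf tendsto_const[of "- z 0"]] by simp
  then have sq_top: "filterlim (\<lambda>t. (cmod (z t - z 0))\<^sup>2) at_top (at_left T)"
    using filterlim_pow_at_top[OF _ filterlim_at_infinity_imp_norm_at_top, of 2] by simp
  have "filterlim (\<lambda>t. 1 / T * (cmod (z t - z 0))\<^sup>2) at_top (at_left T)"
    using filterlim_tendsto_pos_mult_at_top[OF tendsto_const _ sq_top, of "1 / T"] \<open>T > 0\<close> by simp
  then show "filterlim (\<lambda>t. Re (G (z 0)) + 1 / T * (cmod (z t - z 0))\<^sup>2) at_top (at_left T)"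
    by (rule filterlim_tendsto_add_at_top[OF tendsto_const])
  show "\<forall>\<^sub>F t in at_left T. Re (G (z 0)) + 1 / T * (cmod (z t - z 0))\<^sup>2 \<le> Re (G (z t))"
    using eventually_at_left_real[OF \<open>T > 0\<close>]
  proof eventually_elim
    case (elim t)
    then have "(cmod (z t - z 0))\<^sup>2 / T \<le> Re (G (z t)) - Re (G (z 0))"
      using flow_trajectory_displacement[OF hol flow, of t] \<open>T > 0\<close>
      by (simp add: pos_divide_le_eq mult.commute)
    then show ?case
      by simp
  qed
qed

lemma level_curve_eq_if_Re_eq:
  fixes G :: "complex \<Rightarrow> complex" and \<gamma> :: "real \<Rightarrow> complex"
  assumes hol: "G holomorphic_on UNIV"
    and \<gamma>_cont: "continuous_on {0..} \<gamma>"
    and no_zero: "\<forall>s\<ge>0. deriv G (\<gamma> s) \<noteq> 0"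
    and level: "\<forall>s\<ge>0. Im (G (\<gamma> s)) = \<beta>"
    and incr: "mono_on {0..} (\<lambda>s. Re (G (\<gamma> s)))"
    and ab: "0 \<le> a" "a \<le> b"
    and eq: "Re (G (\<gamma> a)) = Re (G (\<gamma> b))"
  shows "\<gamma> a = \<gamma> b"
proof -
  have G_const: "G (\<gamma> s) = G (\<gamma> a)" if s: "s \<in> {a..b}" for s
  proof (rule complex_eqI)
    have "Re (G (\<gamma> a)) \<le> Re (G (\<gamma> s))" "Re (G (\<gamma> s)) \<le> Re (G (\<gamma> b))"
      using s ab by (auto intro!: mono_onD[OF incr])
    then show "Re (G (\<gamma> s)) = Re (G (\<gamma> a))"
      using eq by simp
    show "Im (G (\<gamma> s)) = Im (G (\<gamma> a))"
      using level s ab by simp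
  qed
  have "\<gamma> constant_on {a..b}"
  proof (rule continuous_discrete_range_constant)
    show "continuous_on {a..b} \<gamma>"
      by (rule continuous_on_subset[OF \<gamma>_cont]) (use ab in auto)
    fix x assume x: "x \<in> {a..b}"
    obtain r where r: "r > 0" "inj_on G (ball (\<gamma> x) r)"
      using has_complex_derivative_locally_injective[OF hol, of "\<gamma> x"] no_zero x ab by auto
    have "r \<le> norm (\<gamma> y - \<gamma> x)" if y: "y \<in> {a..b}" "\<gamma> y \<noteq> \<gamma> x" for y
    proof (rule ccontr)
      assume "\<not> r \<le> norm (\<gamma> y - \<gamma> x)"
      then have "\<gamma> y \<in> ball (\<gamma> x) r"
        by (simp add: dist_norm norm_minus_commute)
      moreover have "G (\<gamma> y) = G (\<gamma> x)"
        using G_const x y by metis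
      ultimately have "\<gamma> y = \<gamma> x"
        using r by (meson centre_in_ball inj_onD)
      with y show False by simp
    qed
    then show "\<exists>e>0. \<forall>y. y \<in> {a..b} \<and> \<gamma> y \<noteq> \<gamma> x \<longrightarrow> e \<le> norm (\<gamma> y - \<gamma> x)"
      using r by blast
  qed simp
  then show ?thesis
    using ab unfolding constant_on_def by force
qed

lemma path_hits_level_curve:
  fixes G :: "complex \<Rightarrow> complex" and \<gamma> z :: "real \<Rightarrow> complex"
  assumes hol: "G holomorphic_on UNIV"
    and \<gamma>_cont: "continuous_on {0..} \<gamma>"
    and no_zero: "\<forall>s\<ge>0. deriv G (\<gamma> s) \<noteq> 0"
    and level: "\<forall>s\<ge>0. Im (G (\<gamma> s)) = \<beta>"
    and incr: "mono_on {0..} (\<lambda>s. Re (G (\<gamma> s)))"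
    and "T > 0" and z_cont: "continuous_on {0..<T} z" and z_on: "z ` {0..<T} \<subseteq> \<gamma> ` {0..}"
    and Re_top: "filterlim (\<lambda>t. Re (G (z t))) at_top (at_left T)"
    and s: "s \<ge> 0" "Re (G (z 0)) \<le> Re (G (\<gamma> s))"
  shows "\<exists>t\<in>{0..<T}. z t = \<gamma> s"
proof -
  have "\<forall>\<^sub>F t in at_left T. Re (G (\<gamma> s)) \<le> Re (G (z t))"
    using Re_top unfolding filterlim_at_top by blast
  with eventually_at_left_real[OF \<open>T > 0\<close>]
  have "\<forall>\<^sub>F t in at_left T. t \<in> {0<..<T} \<and> Re (G (\<gamma> s)) \<le> Re (G (z t))"
    by (rule eventually_conj)
  then obtain t1 where t1: "t1 \<in> {0<..<T}" "Re (G (\<gamma> s)) \<le> Re (G (z t1))"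
    using eventually_happens'[OF trivial_limit_at_left_real] by blast
  have "continuous_on {0..t1} (\<lambda>t. Re (G (z t)))"
    by (rule continuous_on_Re_holomorphic_comp[OF hol continuous_on_subset[OF z_cont]]) (use t1 in auto)
  then obtain t where t: "0 \<le> t" "t \<le> t1" "Re (G (z t)) = Re (G (\<gamma> s))"
    using IVT'[of "\<lambda>t. Re (G (z t))" 0 "Re (G (\<gamma> s))" t1] s t1 by auto
  then have "t \<in> {0..<T}"
    using t1 by simp
  then obtain \<sigma> where \<sigma>: "\<sigma> \<ge> 0" "z t = \<gamma> \<sigma>"
    using z_on by force
  consider "\<sigma> \<le> s" | "s \<le> \<sigma>"
    by linarith
  then have "\<gamma> \<sigma> = \<gamma> s"
  proof cases
    case 1
    show ?thesis
      by (rule level_curve_eq_if_Re_eq[OF hol \<gamma>_cont no_zero level incr \<open>\<sigma> \<ge> 0\<close> 1])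
        (use \<sigma> t in simp)
  next
    case 2
    have "\<gamma> s = \<gamma> \<sigma>"
      by (rule level_curve_eq_if_Re_eq[OF hol \<gamma>_cont no_zero level incr \<open>s \<ge> 0\<close> 2])
        (use \<sigma> t in simp)
    then show ?thesis ..
  qed
  with \<open>t \<in> {0..<T}\<close> \<sigma> show ?thesis
    by auto
qed

lemma level_curve_eventually_Re_ge:
  fixes G :: "complex \<Rightarrow> complex" and \<gamma> :: "real \<Rightarrow> complex"
  assumes \<gamma>_cont: "continuous_on {0..} \<gamma>"
    and incr: "mono_on {0..} (\<lambda>s. Re (G (\<gamma> s)))"
    and w_on: "\<forall>x. w x \<in> \<gamma> ` {0..}" and w_inf: "filterlim w at_infinity F"
    and "\<sigma> \<ge> 0"
  shows "\<forall>\<^sub>F x in F. Re (G (\<gamma> \<sigma>)) \<le> Re (G (w x))"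
proof -
  have "compact (\<gamma> ` {0..\<sigma>})"
    by (rule compact_continuous_image[OF continuous_on_subset[OF \<gamma>_cont]]) auto
  then obtain B where B: "\<forall>y\<in>\<gamma> ` {0..\<sigma>}. norm y \<le> B"
    by (meson bounded_iff compact_imp_bounded)
  have "\<forall>\<^sub>F x in F. B + 1 \<le> norm (w x)"
    using filterlim_at_infinity_imp_norm_at_top[OF w_inf] by (simp add: filterlim_at_top)
  then show ?thesis
  proof eventually_elim
    case (elim x)
    obtain s where s: "s \<ge> 0" "w x = \<gamma> s"
      using w_on by force
    have "\<sigma> \<le> s"
    proof (rule ccontr)
      assume "\<not> \<sigma> \<le> s"
      then have "norm (w x) \<le> B"
        using B s by auto
      with elim show False
        by simp
    qed
    then show ?case
      using s \<open>\<sigma> \<ge> 0\<close> by (auto intro: mono_onD[OF incr])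
  qed
qed

lemma eventually_smallo_lt_norm_diff_sq:
  fixes w :: "'a \<Rightarrow> 'b::real_normed_vector" and f :: "'a \<Rightarrow> real"
  assumes w_inf: "filterlim w at_infinity F"
    and small: "f \<in> o[F](\<lambda>x. (norm (w x))\<^sup>2)"
  shows "\<forall>\<^sub>F x in F. K * f x + D < (norm (w x - c))\<^sup>2"
proof -
  define \<epsilon> where "\<epsilon> = 1 / (8 * (\<bar>K\<bar> + 1))"
  have "\<epsilon> > 0"
    by (simp add: \<epsilon>_def add_pos_nonneg)
  have "\<forall>\<^sub>F x in F. \<bar>f x\<bar> \<le> \<epsilon> * (norm (w x))\<^sup>2"
    using landau_o.smallD[OF small \<open>\<epsilon> > 0\<close>] by simp
  moreover have "\<forall>\<^sub>F x in F. max (2 * norm c) (8 * \<bar>D\<bar> + 1) \<le> norm (w x)"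
    using filterlim_at_infinity_imp_norm_at_top[OF w_inf] unfolding filterlim_at_top by blast
  ultimately show ?thesis
  proof eventually_elim
    case (elim x)
    define r where "r = norm (w x)"
    have "r \<ge> 1" "r \<ge> 2 * norm c" "r > 8 * \<bar>D\<bar>"
      using elim by (auto simp: r_def)
    have "K * f x \<le> \<bar>K\<bar> * \<bar>f x\<bar>"
      by (simp add: abs_mult[symmetric])
    also have "\<dots> \<le> \<bar>K\<bar> * \<epsilon> * r\<^sup>2"
      using elim by (simp add: r_def mult.assoc mult_left_mono)
    also have "\<dots> \<le> r\<^sup>2 / 8"
    proof -
      have "\<bar>K\<bar> * \<epsilon> \<le> 1 / 8"
        by (simp add: \<epsilon>_def field_simps)
      from mult_right_mono[OF this zero_le_power2[of r]] show ?thesis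
        by simp
    qed
    finally have "K * f x \<le> r\<^sup>2 / 8" .
    moreover have "D < r\<^sup>2 / 8"
    proof -
      have "r * 1 \<le> r * r"
        using \<open>r \<ge> 1\<close> by (intro mult_left_mono) auto
      then show ?thesis
        using \<open>r > 8 * \<bar>D\<bar>\<close> abs_ge_self[of D] unfolding power2_eq_square by linarith
    qed
    ultimately have "K * f x + D < (r / 2)\<^sup>2"
      by (simp add: power_divide)
    also have "\<dots> \<le> (norm (w x - c))\<^sup>2"
      using norm_triangle_ineq2[of "w x" c] \<open>r \<ge> 2 * norm c\<close> \<open>r \<ge> 1\<close>
      by (intro power_mono) (auto simp: r_def)
    finally show ?case .
  qed
qed

lemma flow_trajectory_level_curve_displacement:
  fixes G :: "complex \<Rightarrow> complex" and \<gamma> z :: "real \<Rightarrow> complex"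
  assumes hol: "G holomorphic_on UNIV"
    and \<gamma>_cont: "continuous_on {0..} \<gamma>"
    and no_zero: "\<forall>s\<ge>0. deriv G (\<gamma> s) \<noteq> 0"
    and level: "\<forall>s\<ge>0. Im (G (\<gamma> s)) = \<beta>"
    and incr: "mono_on {0..} (\<lambda>s. Re (G (\<gamma> s)))"
    and "T > 0" and flow: "flow_trajectory G T z" and z_on: "z ` {0..<T} \<subseteq> \<gamma> ` {0..}"
    and z_inf: "filterlim z at_infinity (at_left T)"
    and w_on: "\<forall>x. w x \<in> \<gamma> ` {0..}" and w_inf: "filterlim w at_infinity F"
  shows "\<forall>\<^sub>F x in F. (cmod (w x - z 0))\<^sup>2 \<le> T * cmod (G (w x)) + T * \<bar>Re (G (z 0))\<bar>"
proof -
  have Re_top: "filterlim (\<lambda>t. Re (G (z t))) at_top (at_left T)"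
    by (rule flow_trajectory_Re_tendsto_at_top[OF hol flow \<open>T > 0\<close> z_inf])
  obtain \<sigma>\<^sub>0 where "\<sigma>\<^sub>0 \<ge> 0" "z 0 = \<gamma> \<sigma>\<^sub>0"
    using z_on \<open>T > 0\<close> by force
  from level_curve_eventually_Re_ge[OF \<gamma>_cont incr w_on w_inf \<open>\<sigma>\<^sub>0 \<ge> 0\<close>]
  show ?thesis
  proof eventually_elim
    case (elim x)
    obtain s where s: "s \<ge> 0" "w x = \<gamma> s"
      using w_on by force
    have "\<exists>t\<in>{0..<T}. z t = w x"
      using path_hits_level_curve[OF hol \<gamma>_cont no_zero level incr \<open>T > 0\<close>
          flow_trajectory_continuous_on[OF flow] z_on Re_top s(1)] elim s(2) \<open>z 0 = \<gamma> \<sigma>\<^sub>0\<close>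
      by simp
    then obtain t where t: "t \<in> {0..<T}" "z t = w x"
      by blast
    have "(cmod (w x - z 0))\<^sup>2 \<le> T * (Re (G (w x)) - Re (G (z 0)))"
      using flow_trajectory_displacement[OF hol flow t(1)] t(2) by simp
    also have "\<dots> \<le> T * (cmod (G (w x)) + \<bar>Re (G (z 0))\<bar>)"
      using \<open>T > 0\<close> complex_Re_le_cmod[of "G (w x)"] by (intro mult_left_mono) auto
    finally show ?case
      by (simp add: distrib_left)
  qed
qed

theorem proposition4p1:
  fixes G :: "complex \<Rightarrow> complex" and \<gamma> :: "real \<Rightarrow> complex"
    and \<alpha> \<beta> :: real and zs :: "nat \<Rightarrow> complex"
  assumes G: "transcendental_entire G"
    and \<gamma>_cont: "continuous_on {0..} \<gamma>"
    and \<gamma>_inf: "filterlim \<gamma> at_infinity at_top"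
    and no_zero: "\<forall>s\<ge>0. deriv G (\<gamma> s) \<noteq> 0"
    and level: "\<forall>s\<ge>0. Im (G (\<gamma> s)) = \<beta>"
    and incr: "mono_on {0..} (\<lambda>s. Re (G (\<gamma> s)))"
    and lower: "\<forall>s\<ge>0. Re (G (\<gamma> s)) \<ge> \<alpha>"
    and zs_on: "\<forall>n. zs n \<in> \<gamma> ` {0..}"
    and zs_inf: "filterlim zs at_infinity sequentially"
    and small: "(\<lambda>n. cmod (G (zs n))) \<in> o(\<lambda>n. (cmod (zs n))^2)"
  shows "\<not> (\<exists>T::real. \<exists>z::real \<Rightarrow> complex. T > 0 \<and>
            (\<forall>t\<in>{0..<T}. (z has_vector_derivative cnj (deriv G (z t))) (at t within {0..<T})) \<and>
            (\<forall>t\<in>{0..<T}. z t \<in> \<gamma> ` {0..}) \<and>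
            filterlim z at_infinity (at_left T))"
proof
  assume "\<exists>T z. T > 0 \<and>
            (\<forall>t\<in>{0..<T}. (z has_vector_derivative cnj (deriv G (z t))) (at t within {0..<T})) \<and>
            (\<forall>t\<in>{0..<T}. z t \<in> \<gamma> ` {0..}) \<and>
            filterlim z at_infinity (at_left T)"
  then obtain T z where "T > 0" and flow: "flow_trajectory G T z"
    and z_on: "z ` {0..<T} \<subseteq> \<gamma> ` {0..}" and z_inf: "filterlim z at_infinity (at_left T)"
    unfolding flow_trajectory_def by blast
  have hol: "G holomorphic_on UNIV"
    using G by (simp add: transcendental_entire_def)
  have "\<forall>\<^sub>F n in sequentially.
      (cmod (zs n - z 0))\<^sup>2 \<le> T * cmod (G (zs n)) + T * \<bar>Re (G (z 0))\<bar>"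
    by (rule flow_trajectory_level_curve_displacement
        [OF hol \<gamma>_cont no_zero level incr \<open>T > 0\<close> flow z_on z_inf zs_on zs_inf])
  moreover have "\<forall>\<^sub>F n in sequentially.
      T * cmod (G (zs n)) + T * \<bar>Re (G (z 0))\<bar> < (cmod (zs n - z 0))\<^sup>2"
    by (rule eventually_smallo_lt_norm_diff_sq[OF zs_inf small])
  ultimately have "\<forall>\<^sub>F n in sequentially. False"
    by eventually_elim simp
  then show False
    by simp
qed

end
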